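(* Let $n\in\mathbb N$, let $\varphi\in\mathscr S_M(\mathbb R)$ be even and real-valued, and let $\varepsilon>0$. Then the map $T_\varepsilon:\mathscr P_n(\mathbb R)\to\mathscr P_n(\mathbb R)$, $T_\varepsilon(p)=p*\varphi_\varepsilon$, is a linear bijection (an automorphism of $\mathscr P_n(\mathbb R)$). Moreover, for $p\in\mathscr P_n(\mathbb R)$, with $p_0:=p$, $p_{j+1}:=T_\varepsilon(p_j)-p_j$ and $T_\varepsilon^0:=\mathrm{id}$: if $n$ is even, $$T_\varepsilon^{-1}(p)=\sum_{j=0}^{n/2}(-1)^jp_j=\sum_{j=0}^{n/2}\sum_{k=0}^{j}(-1)^{j+k}\binom{j}{k}T_\varepsilon^{\,j-k}(p)=\sum_{j=0}^{n/2}(-1)^{n/2-j}\binom{n/2+1}{j}T_\varepsilon^{\,n/2-j}(p);$$ if $n$ is odd, $$T_\varepsilon^{-1}(p)=\sum_{j=0}^{(n-1)/2}(-1)^jp_j=\sum_{j=0}^{(n-1)/2}(-1)^{\frac{n-1}{2}-j}\binom{\frac{n+1}{2}}{j}T_\varepsilon^{\,\frac{n-1}{2}-j}(p).$$ Here $T_\varepsilon^m$ denotes the $m$-fold composition of $T_\varepsilon$.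
   Context: $\mathscr S_M(\mathbb R)=\{f\in\mathscr S(\mathbb R): \int_{\mathbb R}f=1\}$, where $\mathscr S(\mathbb R)$ is the Schwartz space. $\varphi_\varepsilon(x):=\frac1\varepsilon\varphi(x/\varepsilon)$ for $\varepsilon>0$. $\mathscr P_n(\mathbb R)$ is the real vector space of real polynomials of degree at most $n$. Convolution: $(f*g)(x)=\int_{\mathbb R}f(x-y)g(y)\,dy$. *)

theory Defs
  imports "HOL-Analysis.Analysis" "HOL-Computational_Algebra.Polynomial"
begin

definition schwartz :: "(real \<Rightarrow> real) \<Rightarrow> bool" where
  "schwartz f \<longleftrightarrow>
     (\<forall>m x. ((deriv ^^ m) f) differentiable (at x)) \<and>
     (\<forall>k m. \<exists>C. \<forall>x. \<bar>x\<bar> ^ k * \<bar>(deriv ^^ m) f x\<bar> \<le> C)"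

definition schwartz_M :: "(real \<Rightarrow> real) \<Rightarrow> bool" where
  "schwartz_M f \<longleftrightarrow> schwartz f \<and> (f has_integral 1) UNIV"

definition rescale :: "real \<Rightarrow> (real \<Rightarrow> real) \<Rightarrow> real \<Rightarrow> real" where
  "rescale \<epsilon> \<phi> x = \<phi> (x / \<epsilon>) / \<epsilon>"

definition conv :: "(real \<Rightarrow> real) \<Rightarrow> (real \<Rightarrow> real) \<Rightarrow> real \<Rightarrow> real" where
  "conv f g = (\<lambda>x. integral UNIV (\<lambda>y. f (x - y) * g y))"

definition polys_upto :: "nat \<Rightarrow> (real \<Rightarrow> real) set" where
  "polys_upto n = {poly p | p :: real poly. degree p \<le> n}"

end

theory Submission
  imports Defs "HOL-Probability.Sinc_Integral"
begin

(* Write mu_i for the i-th moment of phi_eps.  Binomial expansion of (x - y)^k gives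
   conv x^k phi_eps = sum_i (k choose i) (-1)^i mu_i x^(k-i), and mu_0 = 1, mu_1 = 0 because
   phi has integral 1 and is even.  So D = T_eps - id lowers the degree by two, and
   D^(n div 2 + 1) vanishes on P_n: T_eps is unipotent there, with inverse the finite
   Neumann series sum_(j <= n div 2) (-D)^j.  Expanding D^j = (T_eps - id)^j binomially and
   summing with the hockey-stick identity gives the other two forms. *)

lemma sum_atMost_rev: "(\<Sum>i\<le>n. f (n - i)) = (\<Sum>i\<le>(n::nat). f i)"
  using sum.atLeastAtMost_rev[of f 0 n] by (simp add: atLeast0AtMost)

lemma sum_alternating_binomial_Suc:
  fixes a :: "nat \<Rightarrow> 'a::comm_ring_1"
  shows "(\<Sum>k\<le>Suc j. (-1)^k * of_nat (Suc j choose k) * a (Suc j - k)) =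
         (\<Sum>k\<le>j. (-1)^k * of_nat (j choose k) * a (Suc j - k))
       - (\<Sum>k\<le>j. (-1)^k * of_nat (j choose k) * a (j - k))"
proof -
  have "(\<Sum>k\<le>j. (-1)^k * of_nat (j choose k) * a (Suc j - k))
      = (\<Sum>k\<le>Suc j. (-1)^k * of_nat (j choose k) * a (Suc j - k))"
    by (simp add: binomial_eq_0)
  also have "\<dots> = a (Suc j) - (\<Sum>k\<le>j. (-1)^k * of_nat (j choose Suc k) * a (j - k))"
    by (subst sum.atMost_Suc_shift) (simp add: sum_negf)
  finally show ?thesis
    by (subst sum.atMost_Suc_shift)
       (simp add: binomial_Suc_Suc algebra_simps sum.distrib sum_subtractf sum_negf)
qed

lemma sum_alternating_binomial_triangle:
  fixes a :: "nat \<Rightarrow> 'a::comm_ring_1"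
  shows "(\<Sum>j\<le>N. \<Sum>k\<le>j. (-1)^(j + k) * of_nat (j choose k) * a (j - k))
       = (\<Sum>j\<le>N. (-1)^(N - j) * of_nat (Suc N choose j) * a (N - j))"
proof -
  have "(\<Sum>k\<le>j. (-1)^(j + k) * of_nat (j choose k) * a (j - k))
      = (\<Sum>i\<le>N. (-1)^i * of_nat (j choose i) * a i)" if "j \<le> N" for j
  proof -
    have "(\<Sum>k\<le>j. (-1)^(j + k) * of_nat (j choose k) * a (j - k))
        = (\<Sum>k\<le>j. (-1)^(j - k) * of_nat (j choose (j - k)) * a (j - k))"
    proof (intro sum.cong refl)
      fix k assume "k \<in> {..j}"
      then have "j + k = (j - k) + 2 * k" by simp
      then have "(-1::'a)^(j + k) = (-1)^(j - k)" by (simp only: power_add power_mult) simp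
      then show "(-1)^(j + k) * of_nat (j choose k) * a (j - k)
               = (-1)^(j - k) * of_nat (j choose (j - k)) * a (j - k)"
        using \<open>k \<in> {..j}\<close> by (simp add: binomial_symmetric[symmetric])
    qed
    also have "\<dots> = (\<Sum>i\<le>j. (-1)^i * of_nat (j choose i) * a i)"
      by (rule sum_atMost_rev)
    also have "\<dots> = (\<Sum>i\<le>N. (-1)^i * of_nat (j choose i) * a i)"
    proof (rule sum.mono_neutral_left)
      show "\<forall>i\<in>{..N} - {..j}. (-1)^i * of_nat (j choose i) * a i = 0"
        by (auto simp: binomial_eq_0)
    qed (use that in auto)
    finally show ?thesis .
  qed
  then have "(\<Sum>j\<le>N. \<Sum>k\<le>j. (-1)^(j + k) * of_nat (j choose k) * a (j - k))
      = (\<Sum>j\<le>N. \<Sum>i\<le>N. (-1)^i * of_nat (j choose i) * a i)"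
    by simp
  also have "\<dots> = (\<Sum>i\<le>N. \<Sum>j\<le>N. (-1)^i * of_nat (j choose i) * a i)"
    by (rule sum.swap)
  also have "\<dots> = (\<Sum>i\<le>N. (-1)^i * of_nat (\<Sum>j\<le>N. j choose i) * a i)"
    by (simp add: sum_distrib_left sum_distrib_right)
  also have "\<dots> = (\<Sum>i\<le>N. (-1)^i * of_nat (Suc N choose (N - i)) * a i)"
  proof (intro sum.cong refl)
    fix i assume "i \<in> {..N}"
    then have "(\<Sum>j\<le>N. j choose i) = Suc N choose (N - i)"
      using binomial_symmetric[of "Suc i" "Suc N"]
      by (simp del: binomial_Suc_Suc add: sum_choose_upper)
    then show "(-1)^i * of_nat (\<Sum>j\<le>N. j choose i) * a i
             = (-1)^i * of_nat (Suc N choose (N - i)) * a i"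
      by simp
  qed
  also have "\<dots> = (\<Sum>j\<le>N. (-1)^(N - j) * of_nat (Suc N choose j) * a (N - j))"
    unfolding sum_atMost_rev[of "\<lambda>j. (-1)^(N - j) * of_nat (Suc N choose j) * a (N - j)", symmetric]
    by (intro sum.cong) auto
  finally show ?thesis .
qed

locale function_space =
  fixes V :: "('a \<Rightarrow> real) set"
  assumes zero_mem: "(\<lambda>x. 0) \<in> V"
    and lincomb_mem: "f \<in> V \<Longrightarrow> h \<in> V \<Longrightarrow> (\<lambda>x. a * f x + b * h x) \<in> V"
begin

lemma sum_mem:
  assumes "finite I" "\<And>i. i \<in> I \<Longrightarrow> f i \<in> V"
  shows "(\<lambda>x. \<Sum>i\<in>I. c i * f i x) \<in> V"
  using assms
proof (induction I rule: finite_induct)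
  case empty
  then show ?case using zero_mem by simp
next
  case (insert i I)
  then have "(\<lambda>x. c i * f i x + 1 * (\<Sum>i\<in>I. c i * f i x)) \<in> V"
    by (intro lincomb_mem) auto
  with insert show ?case by simp
qed

end

locale unipotent_operator = function_space V for V :: "('a \<Rightarrow> real) set" +
  fixes T :: "('a \<Rightarrow> real) \<Rightarrow> 'a \<Rightarrow> real" and N :: nat
  assumes maps_to: "f \<in> V \<Longrightarrow> T f \<in> V"
    and linear: "f \<in> V \<Longrightarrow> h \<in> V \<Longrightarrow>
      T (\<lambda>x. a * f x + b * h x) = (\<lambda>x. a * T f x + b * T h x)"
    and nilpotent: "f \<in> V \<Longrightarrow> ((\<lambda>f x. T f x - f x) ^^ Suc N) f = (\<lambda>x. 0)"
begin

abbreviation D :: "('a \<Rightarrow> real) \<Rightarrow> 'a \<Rightarrow> real" where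
  "D f \<equiv> \<lambda>x. T f x - f x"

lemma linear_scale: "f \<in> V \<Longrightarrow> T (\<lambda>x. c * f x) = (\<lambda>x. c * T f x)"
  using linear[of f f c 0] by simp

lemma linear_sum:
  assumes "finite I" "\<And>i. i \<in> I \<Longrightarrow> f i \<in> V"
  shows "T (\<lambda>x. \<Sum>i\<in>I. c i * f i x) = (\<lambda>x. \<Sum>i\<in>I. c i * T (f i) x)"
  using assms
proof (induction I rule: finite_induct)
  case empty
  then show ?case
    using linear_scale[OF zero_mem, of 0] by simp
next
  case (insert i I)
  then have "T (\<lambda>x. c i * f i x + 1 * (\<Sum>i\<in>I. c i * f i x))
      = (\<lambda>x. c i * T (f i) x + 1 * T (\<lambda>x. \<Sum>i\<in>I. c i * f i x) x)"
    by (intro linear sum_mem) auto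
  with insert show ?case by simp
qed

lemma D_mem: "f \<in> V \<Longrightarrow> D f \<in> V"
  using lincomb_mem[OF maps_to, of f f 1 "-1"] by simp

lemma funpow_T_mem: "f \<in> V \<Longrightarrow> (T ^^ j) f \<in> V"
  by (induction j) (simp_all add: maps_to)

lemma funpow_D_mem: "f \<in> V \<Longrightarrow> (D ^^ j) f \<in> V"
  by (induction j) (simp_all add: D_mem)

lemma funpow_D_eq_binomial_sum:
  assumes "f \<in> V"
  shows "(D ^^ j) f = (\<lambda>x. \<Sum>k\<le>j. (-1)^k * real (j choose k) * (T ^^ (j - k)) f x)"
proof (induction j)
  case 0
  then show ?case by simp
next
  case (Suc j)
  have TD: "T ((D ^^ j) f) = (\<lambda>x. \<Sum>k\<le>j. (-1)^k * real (j choose k) * (T ^^ (Suc j - k)) f x)"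
    unfolding Suc.IH using assms
    by (subst linear_sum) (auto intro: funpow_T_mem simp: Suc_diff_le)
  show ?case
  proof
    fix x
    have "(D ^^ Suc j) f x = T ((D ^^ j) f) x - (D ^^ j) f x"
      by simp
    also have "\<dots> = (\<Sum>k\<le>j. (-1)^k * real (j choose k) * (T ^^ (Suc j - k)) f x)
                   - (\<Sum>k\<le>j. (-1)^k * real (j choose k) * (T ^^ (j - k)) f x)"
      by (simp only: TD) (simp add: Suc.IH)
    also have "\<dots> = (\<Sum>k\<le>Suc j. (-1)^k * real (Suc j choose k) * (T ^^ (Suc j - k)) f x)"
      by (rule sum_alternating_binomial_Suc[symmetric])
    finally show "(D ^^ Suc j) f x
        = (\<Sum>k\<le>Suc j. (-1)^k * real (Suc j choose k) * (T ^^ (Suc j - k)) f x)" .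
  qed
qed

lemma T_inverse_series:
  assumes "f \<in> V"
  shows "T (\<lambda>x. \<Sum>j\<le>N. (-1)^j * (D ^^ j) f x) = f"
proof -
  have "T (\<lambda>x. \<Sum>j\<le>N. (-1)^j * (D ^^ j) f x) = (\<lambda>x. \<Sum>j\<le>N. (-1)^j * T ((D ^^ j) f) x)"
    using assms by (intro linear_sum funpow_D_mem) auto
  also have "\<dots> = (\<lambda>x. \<Sum>j\<le>N. (-1)^j * (D ^^ j) f x - (-1)^Suc j * (D ^^ Suc j) f x)"
    by (simp add: algebra_simps)
  also have "\<dots> = f"
  proof
    fix x
    have "(D ^^ Suc N) f x = 0"
      by (simp only: nilpotent[OF assms])
    then show "(\<Sum>j\<le>N. (-1)^j * (D ^^ j) f x - (-1)^Suc j * (D ^^ Suc j) f x) = f x"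
      by (simp only: sum_telescope[of "\<lambda>j. (-1)^j * (D ^^ j) f x"] mult_zero_right diff_zero) simp
  qed
  finally show ?thesis .
qed

lemma inverse_series_mem: "f \<in> V \<Longrightarrow> (\<lambda>x. \<Sum>j\<le>N. (-1)^j * (D ^^ j) f x) \<in> V"
  using sum_mem[of "{..N}" "\<lambda>j. (D ^^ j) f" "\<lambda>j. (-1)^j"] funpow_D_mem by blast

lemma inj_on: "inj_on T V"
proof (rule inj_onI)
  fix f h assume f: "f \<in> V" and h: "h \<in> V" and "T f = T h"
  define d where "d = (\<lambda>x. 1 * f x + (-1) * h x)"
  have d: "d \<in> V"
    unfolding d_def using f h by (rule lincomb_mem)
  have "T d = (\<lambda>x. 0)"
    unfolding d_def linear[OF f h] \<open>T f = T h\<close> by simp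
  then have Dd: "(D ^^ j) d = (\<lambda>x. (-1)^j * d x)" for j
    by (induction j) (simp_all add: linear_scale[OF d])
  have "(\<lambda>x. (-1)^Suc N * d x) = (\<lambda>x. 0)"
    using nilpotent[OF d] unfolding Dd .
  then show "f = h"
    by (simp add: d_def fun_eq_iff)
qed

lemma bij_betw: "bij_betw T V V"
proof -
  have "f \<in> T ` V" if "f \<in> V" for f
    by (rule rev_image_eqI[OF inverse_series_mem[OF that]]) (simp only: T_inverse_series[OF that])
  then show ?thesis
    using inj_on maps_to by (auto simp: bij_betw_def)
qed

lemma the_inv_into_eq_series:
  assumes "f \<in> V"
  shows "the_inv_into V T f = (\<lambda>x. \<Sum>j\<le>N. (-1)^j * (D ^^ j) f x)"
  using the_inv_into_f_f[OF inj_on inverse_series_mem[OF assms]]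
  by (simp add: T_inverse_series[OF assms])

lemma inverse_series_eq_binomial_sum:
  assumes "f \<in> V"
  shows "(\<lambda>x. \<Sum>j\<le>N. (-1)^j * (D ^^ j) f x)
       = (\<lambda>x. \<Sum>j\<le>N. \<Sum>k\<le>j. (-1)^(j + k) * real (j choose k) * (T ^^ (j - k)) f x)"
proof (intro ext sum.cong refl)
  fix x j
  show "(-1)^j * (D ^^ j) f x = (\<Sum>k\<le>j. (-1)^(j + k) * real (j choose k) * (T ^^ (j - k)) f x)"
    unfolding funpow_D_eq_binomial_sum[OF assms] sum_distrib_left power_add by (simp only: mult.assoc)
qed

lemma binomial_double_sum_eq:
  "(\<lambda>x. \<Sum>j\<le>N. \<Sum>k\<le>j. (-1)^(j + k) * real (j choose k) * (T ^^ (j - k)) f x)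
 = (\<lambda>x. \<Sum>j\<le>N. (-1)^(N - j) * real ((N + 1) choose j) * (T ^^ (N - j)) f x)"
  using sum_alternating_binomial_triangle[where a = "\<lambda>m. (T ^^ m) f _"] by simp

end

lemma polys_upto_iff: "f \<in> polys_upto m \<longleftrightarrow> (\<exists>c. f = (\<lambda>x. \<Sum>k\<le>m. c k * x ^ k))"
proof
  assume "f \<in> polys_upto m"
  then obtain p where p: "f = poly p" "degree p \<le> m"
    by (auto simp: polys_upto_def)
  have "poly p x = (\<Sum>k\<le>m. coeff p k * x ^ k)" for x
    using arg_cong[OF poly_as_sum_of_monoms'[OF p(2)], of "\<lambda>q. poly q x"]
    by (simp add: poly_sum poly_monom)
  then show "\<exists>c. f = (\<lambda>x. \<Sum>k\<le>m. c k * x ^ k)"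
    using p(1) by auto
next
  assume "\<exists>c. f = (\<lambda>x. \<Sum>k\<le>m. c k * x ^ k)"
  then obtain c where c: "f = (\<lambda>x. \<Sum>k\<le>m. c k * x ^ k)" ..
  have "f = poly (\<Sum>k\<le>m. monom (c k) k)"
    by (simp add: c poly_sum poly_monom fun_eq_iff)
  moreover have "degree (\<Sum>k\<le>m. monom (c k) k) \<le> m"
    by (intro degree_sum_le) (auto intro: order.trans[OF degree_monom_le])
  ultimately show "f \<in> polys_upto m"
    by (auto simp: polys_upto_def)
qed

interpretation polys_upto: function_space "polys_upto m" for m
proof
  show "(\<lambda>x. 0) \<in> polys_upto m"
    unfolding polys_upto_iff by (auto intro: exI[of _ "\<lambda>_. 0"])
next
  fix f h a b
  assume "f \<in> polys_upto m" "h \<in> polys_upto m"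
  then obtain c d where "f = (\<lambda>x. \<Sum>k\<le>m. c k * x ^ k)" "h = (\<lambda>x. \<Sum>k\<le>m. d k * x ^ k)"
    unfolding polys_upto_iff by blast
  then have "(\<lambda>x. a * f x + b * h x) = (\<lambda>x. \<Sum>k\<le>m. (a * c k + b * d k) * x ^ k)"
    by (simp add: sum_distrib_left sum.distrib algebra_simps)
  then show "(\<lambda>x. a * f x + b * h x) \<in> polys_upto m"
    unfolding polys_upto_iff by (rule exI[of _ "\<lambda>k. a * c k + b * d k"])
qed

lemma power_in_polys_upto: "k \<le> m \<Longrightarrow> (\<lambda>x. x ^ k) \<in> polys_upto m"
  unfolding polys_upto_def
  by (auto intro!: exI[of _ "monom 1 k"] simp: poly_monom degree_monom_eq)

lemma polys_upto_mono: "m \<le> n \<Longrightarrow> polys_upto m \<subseteq> polys_upto n"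
  by (auto simp: polys_upto_def)

lemma polys_upto_reflect: "f \<in> polys_upto m \<Longrightarrow> (\<lambda>y. f (x - y)) \<in> polys_upto m"
proof -
  assume "f \<in> polys_upto m"
  then obtain p where p: "f = poly p" "degree p \<le> m"
    by (auto simp: polys_upto_def)
  have "(\<lambda>y. f (x - y)) = poly (p \<circ>\<^sub>p [:x, -1:])"
    by (simp add: p(1) poly_pcompose fun_eq_iff)
  moreover have "degree (p \<circ>\<^sub>p [:x, -1:]) \<le> m"
    using p(2) by (simp add: degree_pcompose)
  ultimately show ?thesis
    by (auto simp: polys_upto_def)
qed

definition moment :: "(real \<Rightarrow> real) \<Rightarrow> nat \<Rightarrow> real" where
  "moment g i = (\<integral>y. y ^ i * g y \<partial>lborel)"

lemma integrable_moment_of_rapid_decay: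
  fixes g :: "real \<Rightarrow> real"
  assumes "continuous_on UNIV g" and decay: "\<And>k. \<exists>C. \<forall>y. \<bar>y\<bar> ^ k * \<bar>g y\<bar> \<le> C"
  shows "integrable lborel (\<lambda>y. y ^ i * g y)"
proof -
  obtain C0 C2 where C0: "\<forall>y. \<bar>y\<bar> ^ i * \<bar>g y\<bar> \<le> C0"
    and C2: "\<forall>y. \<bar>y\<bar> ^ (i + 2) * \<bar>g y\<bar> \<le> C2"
    using decay by meson
  have bound: "norm (y ^ i * g y) \<le> (C0 + C2) * inverse (1 + y^2)" for y
  proof -
    have "(1 + y^2) * \<bar>y ^ i * g y\<bar> = \<bar>y\<bar> ^ i * \<bar>g y\<bar> + \<bar>y\<bar> ^ (i + 2) * \<bar>g y\<bar>"
      by (simp add: abs_mult power_abs power_add power2_eq_square algebra_simps)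
    also have "\<dots> \<le> C0 + C2"
      using C0 C2 by (meson add_mono)
    finally have "(1 + y^2) * \<bar>y ^ i * g y\<bar> \<le> C0 + C2" .
    moreover have "1 + y^2 > 0"
      by (simp add: add_pos_nonneg)
    ultimately show ?thesis
      by (simp add: field_simps)
  qed
  have "integrable lborel (\<lambda>y. (C0 + C2) * inverse (1 + y^2))"
    using integrable_inverse_1_plus_square by (simp add: set_integrable_def einterval_eq_UNIV)
  moreover have "(\<lambda>y. y ^ i * g y) \<in> borel_measurable lborel"
    by (simp add: borel_measurable_continuous_onI continuous_intros assms(1))
  ultimately show ?thesis
    by (rule Bochner_Integration.integrable_bound)
       (intro AE_I2, metis bound abs_ge_self order.trans real_norm_def)
qed

lemma schwartz_integrable_moment:
  assumes "schwartz \<phi>"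
  shows "integrable lborel (\<lambda>y. y ^ i * \<phi> y)"
proof (rule integrable_moment_of_rapid_decay)
  have "\<phi> differentiable (at x)" for x
    using assms unfolding schwartz_def by (metis funpow_0)
  then show "continuous_on UNIV \<phi>"
    by (simp add: continuous_at_imp_continuous_on differentiable_imp_continuous_within)
  show "\<exists>C. \<forall>y. \<bar>y\<bar> ^ k * \<bar>\<phi> y\<bar> \<le> C" for k
    using assms unfolding schwartz_def by (metis funpow_0)
qed

lemma rescale_moment_integrand:
  "\<epsilon> > 0 \<Longrightarrow> (\<epsilon> * x) ^ i * rescale \<epsilon> \<phi> (\<epsilon> * x) = \<epsilon> ^ i / \<epsilon> * (x ^ i * \<phi> x)"
  by (simp add: rescale_def power_mult_distrib)

lemma integrable_moment_rescale:
  assumes "\<epsilon> > 0" "integrable lborel (\<lambda>y. y ^ i * \<phi> y)"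
  shows "integrable lborel (\<lambda>y. y ^ i * rescale \<epsilon> \<phi> y)"
  using lborel_integrable_real_affine_iff[of \<epsilon> "\<lambda>y. y ^ i * rescale \<epsilon> \<phi> y" 0] assms
  by (simp add: rescale_moment_integrand)

lemma moment_rescale:
  assumes "\<epsilon> > 0"
  shows "moment (rescale \<epsilon> \<phi>) i = \<epsilon> ^ i * moment \<phi> i"
  using lborel_integral_real_affine[of \<epsilon> "\<lambda>y. y ^ i * rescale \<epsilon> \<phi> y" 0] assms
  by (simp add: moment_def rescale_moment_integrand)

lemma moment_odd_eq_0:
  assumes "\<And>x. g (- x) = g x" and "odd i"
  shows "moment g i = 0"
proof -
  have "moment g i = (\<integral>x. (- x) ^ i * g (- x) \<partial>lborel)"
    using lborel_integral_real_affine[of "-1" "\<lambda>y. y ^ i * g y" 0] by (simp add: moment_def)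
  also have "\<dots> = - moment g i"
    using assms by (simp add: moment_def)
  finally show ?thesis
    by simp
qed

lemma schwartz_M_moment_0:
  assumes "schwartz_M \<phi>"
  shows "moment \<phi> 0 = 1"
proof -
  have "integrable lborel \<phi>"
    using schwartz_integrable_moment[of \<phi> 0] assms by (simp add: schwartz_M_def)
  then have "(\<phi> has_integral (\<integral>x. \<phi> x \<partial>lborel)) UNIV"
    by (rule has_integral_integral_lborel)
  moreover have "(\<phi> has_integral 1) UNIV"
    using assms by (simp add: schwartz_M_def)
  ultimately show ?thesis
    unfolding moment_def by (simp add: has_integral_unique)
qed

lemma conv_eq_lborel:
  "integrable lborel (\<lambda>y. f (x - y) * g y) \<Longrightarrow> conv f g x = (\<integral>y. f (x - y) * g y \<partial>lborel)"
  by (simp add: conv_def integral_unique has_integral_integral_lborel)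

lemma conv_lincomb:
  assumes "\<And>x. integrable lborel (\<lambda>y. f (x - y) * g y)" "\<And>x. integrable lborel (\<lambda>y. h (x - y) * g y)"
  shows "conv (\<lambda>x. a * f x + b * h x) g = (\<lambda>x. a * conv f g x + b * conv h g x)"
proof
  fix x
  have "(\<lambda>y. (a * f (x - y) + b * h (x - y)) * g y) = (\<lambda>y. a * (f (x - y) * g y) + b * (h (x - y) * g y))"
    by (simp add: fun_eq_iff algebra_simps)
  then show "conv (\<lambda>x. a * f x + b * h x) g x = a * conv f g x + b * conv h g x"
    using assms by (simp add: conv_eq_lborel)
qed

lemma conv_sum:
  assumes "finite I" "\<And>i x. i \<in> I \<Longrightarrow> integrable lborel (\<lambda>y. f i (x - y) * g y)"
  shows "conv (\<lambda>x. \<Sum>i\<in>I. c i * f i x) g = (\<lambda>x. \<Sum>i\<in>I. c i * conv (f i) g x)"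
proof
  fix x
  have "(\<lambda>y. (\<Sum>i\<in>I. c i * f i (x - y)) * g y) = (\<lambda>y. \<Sum>i\<in>I. c i * (f i (x - y) * g y))"
    by (simp add: fun_eq_iff sum_distrib_right mult.assoc)
  then show "conv (\<lambda>x. \<Sum>i\<in>I. c i * f i x) g x = (\<Sum>i\<in>I. c i * conv (f i) g x)"
    using assms by (simp add: conv_eq_lborel)
qed

context
  fixes g :: "real \<Rightarrow> real"
  assumes integrable_moments: "\<And>i. integrable lborel (\<lambda>y. y ^ i * g y)"
begin

lemma integrable_polys_upto_times:
  assumes "h \<in> polys_upto m"
  shows "integrable lborel (\<lambda>y. h y * g y)"
proof -
  obtain c where "h = (\<lambda>y. \<Sum>k\<le>m. c k * y ^ k)"
    using assms unfolding polys_upto_iff ..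
  then have "(\<lambda>y. h y * g y) = (\<lambda>y. \<Sum>k\<le>m. c k * (y ^ k * g y))"
    by (simp add: sum_distrib_right mult.assoc)
  then show ?thesis
    by (simp add: integrable_moments)
qed

lemma integrable_conv_polys_upto:
  "f \<in> polys_upto m \<Longrightarrow> integrable lborel (\<lambda>y. f (x - y) * g y)"
  by (rule integrable_polys_upto_times[OF polys_upto_reflect])

lemma conv_power:
  "conv (\<lambda>x. x ^ k) g = (\<lambda>x. \<Sum>i\<le>k. real (k choose i) * (-1) ^ i * moment g i * x ^ (k - i))"
proof
  fix x
  have expand: "(x - y) ^ k = (\<Sum>i\<le>k. real (k choose i) * (- y) ^ i * x ^ (k - i))" for y
    using binomial_ring[of "- y" x k] by simp
  have "(x - y) ^ k * g y = (\<Sum>i\<le>k. (real (k choose i) * (-1) ^ i * x ^ (k - i)) * (y ^ i * g y))" for y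
    unfolding expand sum_distrib_right by (intro sum.cong refl) (simp add: power_minus[of y])
  then have "conv (\<lambda>x. x ^ k) g x
      = (\<integral>y. (\<Sum>i\<le>k. (real (k choose i) * (-1) ^ i * x ^ (k - i)) * (y ^ i * g y)) \<partial>lborel)"
    using conv_eq_lborel[OF integrable_conv_polys_upto[OF power_in_polys_upto[OF order.refl]]] by simp
  also have "\<dots> = (\<Sum>i\<le>k. (real (k choose i) * (-1) ^ i * x ^ (k - i)) * moment g i)"
    by (subst Bochner_Integration.integral_sum) (simp_all add: integrable_moments moment_def)
  finally show "conv (\<lambda>x. x ^ k) g x = (\<Sum>i\<le>k. real (k choose i) * (-1) ^ i * moment g i * x ^ (k - i))"
    by (simp only: mult_ac)
qed

lemma conv_sum_powers:
  "conv (\<lambda>x. \<Sum>k\<le>m. c k * x ^ k) g = (\<lambda>x. \<Sum>k\<le>m. c k * conv (\<lambda>x. x ^ k) g x)"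
  by (rule conv_sum) (auto intro: integrable_conv_polys_upto power_in_polys_upto)

lemma conv_maps_polys_upto:
  assumes "f \<in> polys_upto m"
  shows "conv f g \<in> polys_upto m"
proof -
  obtain c where c: "f = (\<lambda>x. \<Sum>k\<le>m. c k * x ^ k)"
    using assms unfolding polys_upto_iff ..
  have "conv (\<lambda>x. x ^ k) g \<in> polys_upto m" if "k \<le> m" for k
    unfolding conv_power using that
    by (intro polys_upto.sum_mem power_in_polys_upto) auto
  then show ?thesis
    unfolding c conv_sum_powers by (intro polys_upto.sum_mem) auto
qed

lemma conv_power_minus_power:
  assumes "moment g 0 = 1" "moment g 1 = 0"
  shows "(\<lambda>x. conv (\<lambda>x. x ^ k) g x - x ^ k)
       = (\<lambda>x. \<Sum>i\<in>{2..k}. real (k choose i) * (-1) ^ i * moment g i * x ^ (k - i))"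
proof (cases k)
  case 0
  then show ?thesis
    using assms conv_power[of 0] by simp
next
  case (Suc k')
  then have "{..k} = insert 0 (insert 1 {2..k})"
    by auto
  then show ?thesis
    using assms by (simp add: conv_power)
qed

lemma conv_minus_id_sum_powers:
  assumes "moment g 0 = 1" "moment g 1 = 0"
  shows "(\<lambda>x. conv (\<lambda>x. \<Sum>k\<le>m. c k * x ^ k) g x - (\<Sum>k\<le>m. c k * x ^ k))
       = (\<lambda>x. \<Sum>k\<le>m. c k * (\<Sum>i\<in>{2..k}. real (k choose i) * (-1) ^ i * moment g i * x ^ (k - i)))"
proof
  fix x
  have "conv (\<lambda>x. \<Sum>k\<le>m. c k * x ^ k) g x - (\<Sum>k\<le>m. c k * x ^ k)
      = (\<Sum>k\<le>m. c k * (conv (\<lambda>x. x ^ k) g x - x ^ k))"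
    by (simp only: conv_sum_powers sum_subtractf[symmetric] right_diff_distrib)
  also have "\<dots> = (\<Sum>k\<le>m. c k * (\<Sum>i\<in>{2..k}. real (k choose i) * (-1) ^ i * moment g i * x ^ (k - i)))"
    by (simp only: conv_power_minus_power[OF assms, THEN fun_cong])
  finally show "conv (\<lambda>x. \<Sum>k\<le>m. c k * x ^ k) g x - (\<Sum>k\<le>m. c k * x ^ k)
      = (\<Sum>k\<le>m. c k * (\<Sum>i\<in>{2..k}. real (k choose i) * (-1) ^ i * moment g i * x ^ (k - i)))" .
qed

lemma conv_minus_id_lowers_degree:
  assumes "moment g 0 = 1" "moment g 1 = 0" and "f \<in> polys_upto (m + 2)"
  shows "(\<lambda>x. conv f g x - f x) \<in> polys_upto m"
proof -
  obtain c where c: "f = (\<lambda>x. \<Sum>k\<le>m + 2. c k * x ^ k)"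
    using assms(3) unfolding polys_upto_iff ..
  have inner: "(\<lambda>x. \<Sum>i\<in>{2..k}. real (k choose i) * (-1) ^ i * moment g i * x ^ (k - i)) \<in> polys_upto m"
    if "k \<le> m + 2" for k
    using that by (intro polys_upto.sum_mem power_in_polys_upto) auto
  show ?thesis
    unfolding c conv_minus_id_sum_powers[OF assms(1,2)] by (rule polys_upto.sum_mem) (auto intro: inner)
qed

lemma conv_minus_id_vanishes:
  assumes "moment g 0 = 1" "moment g 1 = 0" and "f \<in> polys_upto 1"
  shows "(\<lambda>x. conv f g x - f x) = (\<lambda>x. 0)"
proof -
  obtain c where c: "f = (\<lambda>x. \<Sum>k\<le>1. c k * x ^ k)"
    using assms(3) unfolding polys_upto_iff ..
  show ?thesis
    unfolding c conv_minus_id_sum_powers[OF assms(1,2)] by simp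
qed

lemma conv_minus_id_nilpotent:
  assumes "moment g 0 = 1" "moment g 1 = 0" and "f \<in> polys_upto (2 * N + 1)"
  shows "((\<lambda>f x. conv f g x - f x) ^^ Suc N) f = (\<lambda>x. 0)"
  using assms(3)
proof (induction N arbitrary: f)
  case 0
  then show ?case
    using conv_minus_id_vanishes[OF assms(1,2)] by simp
next
  case (Suc N)
  then have "(\<lambda>x. conv f g x - f x) \<in> polys_upto (2 * N + 1)"
    using conv_minus_id_lowers_degree[OF assms(1,2), where m = "2 * N + 1"] by simp
  then show ?case
    using Suc.IH by (simp only: funpow_Suc_right comp_def)
qed

lemma conv_unipotent_on_polys_upto:
  assumes "moment g 0 = 1" "moment g 1 = 0"
  shows "unipotent_operator (polys_upto n) (\<lambda>f. conv f g) (n div 2)"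
proof
  fix f h a b
  assume "f \<in> polys_upto n" "h \<in> polys_upto n"
  then show "conv (\<lambda>x. a * f x + b * h x) g = (\<lambda>x. a * conv f g x + b * conv h g x)"
    by (intro conv_lincomb integrable_conv_polys_upto)
next
  fix f
  assume f: "f \<in> polys_upto n"
  then show "conv f g \<in> polys_upto n"
    by (rule conv_maps_polys_upto)
  have "n \<le> 2 * (n div 2) + 1"
    by presburger
  with f have "f \<in> polys_upto (2 * (n div 2) + 1)"
    using polys_upto_mono by (meson subsetD)
  then show "((\<lambda>f x. conv f g x - f x) ^^ Suc (n div 2)) f = (\<lambda>x. 0)"
    by (rule conv_minus_id_nilpotent[OF assms])
qed

end

theorem mainTheorem5:
  fixes n :: nat and \<phi> :: "real \<Rightarrow> real" and \<epsilon> :: real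
  assumes "schwartz_M \<phi>"
    and "\<forall>x. \<phi> (- x) = \<phi> x"
    and "\<epsilon> > 0"
  defines "T \<equiv> (\<lambda>f. conv f (rescale \<epsilon> \<phi>))"
  shows "(\<forall>p\<in>polys_upto n. \<forall>q\<in>polys_upto n. \<forall>a b :: real.
            T (\<lambda>x. a * p x + b * q x) = (\<lambda>x. a * T p x + b * T q x))
    \<and> bij_betw T (polys_upto n) (polys_upto n)
    \<and> (\<forall>p\<in>polys_upto n.
         let Tinv = the_inv_into (polys_upto n) T;
             pj = (\<lambda>j. ((\<lambda>f. (\<lambda>x. T f x - f x)) ^^ j) p)
         in (even n \<longrightarrow>
               Tinv p = (\<lambda>x. \<Sum>j\<le>n div 2. (-1) ^ j * pj j x)
             \<and> (\<lambda>x. \<Sum>j\<le>n div 2. (-1) ^ j * pj j x)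
                 = (\<lambda>x. \<Sum>j\<le>n div 2. \<Sum>k\<le>j.
                        (-1) ^ (j + k) * real (j choose k) * (T ^^ (j - k)) p x)
             \<and> (\<lambda>x. \<Sum>j\<le>n div 2. \<Sum>k\<le>j.
                        (-1) ^ (j + k) * real (j choose k) * (T ^^ (j - k)) p x)
                 = (\<lambda>x. \<Sum>j\<le>n div 2.
                        (-1) ^ (n div 2 - j) * real ((n div 2 + 1) choose j)
                          * (T ^^ (n div 2 - j)) p x))
          \<and> (odd n \<longrightarrow>
               Tinv p = (\<lambda>x. \<Sum>j\<le>(n - 1) div 2. (-1) ^ j * pj j x)
             \<and> (\<lambda>x. \<Sum>j\<le>(n - 1) div 2. (-1) ^ j * pj j x)
                 = (\<lambda>x. \<Sum>j\<le>(n - 1) div 2.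
                        (-1) ^ ((n - 1) div 2 - j) * real ((n + 1) div 2 choose j)
                          * (T ^^ ((n - 1) div 2 - j)) p x)))"
proof -
  define g where "g = rescale \<epsilon> \<phi>"
  have T_eq: "T = (\<lambda>f. conv f g)"
    by (simp add: T_def g_def)
  have moments: "integrable lborel (\<lambda>y. y ^ i * g y)" for i
    unfolding g_def using assms(1,3)
    by (intro integrable_moment_rescale schwartz_integrable_moment) (auto simp: schwartz_M_def)
  have moment_0: "moment g 0 = 1"
    using schwartz_M_moment_0[OF assms(1)] by (simp add: g_def moment_rescale[OF assms(3)])
  have moment_1: "moment g 1 = 0"
    using moment_odd_eq_0[of \<phi> 1] assms(2) by (simp add: g_def moment_rescale[OF assms(3)])
  interpret unipotent_operator "polys_upto n" T "n div 2"
    unfolding T_eq by (rule conv_unipotent_on_polys_upto[OF moments moment_0 moment_1])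
  have odd_div: "(n - 1) div 2 = n div 2" "(n + 1) div 2 = n div 2 + 1" if "odd n"
    using that by presburger+
  show ?thesis
    unfolding Let_def
    by (intro conjI ballI allI impI)
       (simp_all only: linear bij_betw odd_div not_False_eq_True the_inv_into_eq_series
         inverse_series_eq_binomial_sum binomial_double_sum_eq)
qed

end
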